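(* Let $K$ be a field, $c\in K\setminus\{0\}$, $n\ge1$, and let $f,g$ be $c$-friezes of order $n$ over $K$. If there is $a\in\mathbb{Z}$ such that $f(a+m,a+m)=g(a+m,a+m)$ for $m=0,1,\dots,n+2$ (i.e. $f$ and $g$ agree on $n+3$ consecutive elements of the first row), then $f=g$.
   Context: The $c$-continuant polynomials $P_k=P_k^c$ ($k\ge-1$) are defined by $P_{-1}=0$, $P_0=1$, and for $k\ge1$, $P_k(x_1,\dots,x_k)=x_kP_{k-1}(x_1,\dots,x_{k-1})+cP_{k-2}(x_1,\dots,x_{k-2})$. A family $(x_i)_{i\in\mathbb{Z}}$ in $K$ is $n$-admissible if $P_{n+2}(x_i,\dots,x_{i+n+1})=0$ for all $i$. Let $\mathbb{B}_n=\{(i,j)\in\mathbb{Z}^2:-2\le j-i\le n+1\}$. A $c$-frieze of order $n$ is a function $f:\mathbb{B}_n\to K$ for which there is an $n$-admissible family $(x_i)$ with $f(i,j)=P_{j-i+1}(x_i,\dots,x_j)$ for all $(i,j)\in\mathbb{B}_n$; its first row consists of the values $f(i,i)=x_i$. *)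

theory Defs
  imports Main
begin

text \<open>cont c x i k = P_k(x_i, x_(i+1), ..., x_(i+k-1)) for k \<ge> 0 (c-continuant).\<close>
fun cont :: "'a::field \<Rightarrow> (int \<Rightarrow> 'a) \<Rightarrow> int \<Rightarrow> nat \<Rightarrow> 'a" where
  "cont c x i 0 = 1"
| "cont c x i (Suc 0) = x i"
| "cont c x i (Suc (Suc k)) = x (i + int k + 1) * cont c x i (Suc k) + c * cont c x i k"

definition contI :: "'a::field \<Rightarrow> (int \<Rightarrow> 'a) \<Rightarrow> int \<Rightarrow> int \<Rightarrow> 'a" where
  "contI c x i k = (if k < 0 then 0 else cont c x i (nat k))"

definition admissible :: "'a::field \<Rightarrow> nat \<Rightarrow> (int \<Rightarrow> 'a) \<Rightarrow> bool" where
  "admissible c n x \<longleftrightarrow> (\<forall>i. cont c x i (n + 2) = 0)"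

definition frieze_domain :: "nat \<Rightarrow> (int \<times> int) set" where
  "frieze_domain n = {(i, j). -2 \<le> j - i \<and> j - i \<le> int n + 1}"

definition is_frieze :: "'a::field \<Rightarrow> nat \<Rightarrow> (int \<times> int \<Rightarrow> 'a) \<Rightarrow> bool" where
  "is_frieze c n f \<longleftrightarrow> (\<exists>x. admissible c n x \<and>
      (\<forall>i j. (i, j) \<in> frieze_domain n \<longrightarrow> f (i, j) = contI c x i (j - i + 1)))"

end

theory Submission
  imports Defs
begin

text \<open>
  A frieze is determined by its first row, and the first row of a frieze of order n is
  an n-admissible family. By the determinant identity
  P_(k+2)(x_i..) P_k(x_(i+1)..) - P_(k+1)(x_i..) P_(k+1)(x_(i+1)..) = c (-c)^k,
  admissibility forces P_(n+1) of every window of n+1 entries to be nonzero (as c \<noteq> 0).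
  Expanding P_(n+2) = 0 along its last (resp. first) entry therefore expresses that entry
  rationally in terms of the other n+1, so a window of n+1 consecutive entries determines
  its right and left neighbours, and by sliding the window the whole family.
\<close>

lemma cont_cong:
  assumes "\<And>j. i \<le> j \<Longrightarrow> j < i + int k \<Longrightarrow> x j = y j"
  shows "cont c x i k = cont c y i k"
  using assms by (induction c x i k rule: cont.induct) auto

lemma cont_Suc_Suc_left:
  "cont c x i (Suc (Suc k)) = x i * cont c x (i + 1) (Suc k) + c * cont c x (i + 2) k"
proof (induction k rule: less_induct)
  case (less k)
  consider "k = 0" | "k = 1" | m where "k = Suc (Suc m)"
    by (metis One_nat_def not0_implies_Suc)
  then show ?case
  proof cases
    case 3
    have IH1: "cont c x i (Suc (Suc (Suc m)))
        = x i * cont c x (i + 1) (Suc (Suc m)) + c * cont c x (i + 2) (Suc m)"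
      using less[of "Suc m"] 3 by simp
    have IH2: "cont c x i (Suc (Suc m)) = x i * cont c x (i + 1) (Suc m) + c * cont c x (i + 2) m"
      using less[of m] 3 by simp
    let ?z = "x (i + int m + 3)"
    have "cont c x i (Suc (Suc k))
        = ?z * cont c x i (Suc (Suc (Suc m))) + c * cont c x i (Suc (Suc m))"
      using 3 by (simp add: algebra_simps)
    also have "\<dots> = x i * (?z * cont c x (i + 1) (Suc (Suc m)) + c * cont c x (i + 1) (Suc m))
        + c * (?z * cont c x (i + 2) (Suc m) + c * cont c x (i + 2) m)"
      unfolding IH1 IH2 by (simp add: algebra_simps)
    also have "\<dots> = x i * cont c x (i + 1) (Suc k) + c * cont c x (i + 2) k"
      using 3 by (simp add: algebra_simps)
    finally show ?thesis .
  qed (simp_all add: algebra_simps)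
qed

lemma cont_det:
  "cont c x i (Suc (Suc k)) * cont c x (i + 1) k - cont c x i (Suc k) * cont c x (i + 1) (Suc k)
    = c * (- c) ^ k"
proof (induction k)
  case 0
  then show ?case by (simp add: algebra_simps)
next
  case (Suc k)
  let ?z = "x (i + int k + 2)"
  have "cont c x i (Suc (Suc (Suc k))) * cont c x (i + 1) (Suc k)
        - cont c x i (Suc (Suc k)) * cont c x (i + 1) (Suc (Suc k))
      = (?z * cont c x i (Suc (Suc k)) + c * cont c x i (Suc k)) * cont c x (i + 1) (Suc k)
        - cont c x i (Suc (Suc k)) * (?z * cont c x (i + 1) (Suc k) + c * cont c x (i + 1) k)"
    by (simp add: algebra_simps)
  also have "\<dots> = - c * (cont c x i (Suc (Suc k)) * cont c x (i + 1) k
                       - cont c x i (Suc k) * cont c x (i + 1) (Suc k))"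
    by (simp add: algebra_simps)
  also have "\<dots> = c * (- c) ^ Suc k"
    using Suc by simp
  finally show ?case .
qed

lemma admissibleD: "admissible c n x \<Longrightarrow> cont c x i (Suc (Suc n)) = 0"
  unfolding admissible_def by (simp add: numeral_2_eq_2)

lemma admissible_cont_neq_zero:
  assumes "admissible c n x" and "c \<noteq> 0"
  shows "cont c x i (Suc n) \<noteq> 0"
proof -
  have "- (cont c x i (Suc n) * cont c x (i + 1) (Suc n)) = c * (- c) ^ n"
    using cont_det[of c x i n] admissibleD[OF assms(1)] by simp
  with assms(2) show ?thesis by auto
qed

lemma cancel_affine:
  fixes u v p q :: "'a::field"
  assumes "u * p + q = 0" and "v * p + q = 0" and "p \<noteq> 0"
  shows "u = v"
  using assms by (metis add_right_cancel mult_right_cancel)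

lemma admissible_eq_right_neighbour:
  assumes x: "admissible c n x" and y: "admissible c n y" and "c \<noteq> 0"
    and agree: "\<And>j. i \<le> j \<Longrightarrow> j \<le> i + int n \<Longrightarrow> x j = y j"
  shows "x (i + int n + 1) = y (i + int n + 1)"
proof (rule cancel_affine)
  have "cont c y i k = cont c x i k" if "k \<le> Suc n" for k
    using agree that by (intro cont_cong) auto
  then show "x (i + int n + 1) * cont c x i (Suc n) + c * cont c x i n = 0"
    and "y (i + int n + 1) * cont c x i (Suc n) + c * cont c x i n = 0"
    using admissibleD[OF x, of i] admissibleD[OF y, of i] by simp_all
  show "cont c x i (Suc n) \<noteq> 0"
    using admissible_cont_neq_zero[OF x \<open>c \<noteq> 0\<close>] .
qed

lemma admissible_eq_left_neighbour:
  assumes x: "admissible c n x" and y: "admissible c n y" and "c \<noteq> 0"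
    and agree: "\<And>j. i + 1 \<le> j \<Longrightarrow> j \<le> i + int n + 1 \<Longrightarrow> x j = y j"
  shows "x i = y i"
proof (rule cancel_affine)
  have "cont c y (i + 1) (Suc n) = cont c x (i + 1) (Suc n)"
    and "cont c y (i + 2) n = cont c x (i + 2) n"
    using agree by (auto intro!: cont_cong)
  then show "x i * cont c x (i + 1) (Suc n) + c * cont c x (i + 2) n = 0"
    and "y i * cont c x (i + 1) (Suc n) + c * cont c x (i + 2) n = 0"
    using admissibleD[OF x, of i] admissibleD[OF y, of i] cont_Suc_Suc_left[of c _ i n]
    by simp_all
  show "cont c x (i + 1) (Suc n) \<noteq> 0"
    using admissible_cont_neq_zero[OF x \<open>c \<noteq> 0\<close>] .
qed

lemma admissible_eqI_window:
  assumes x: "admissible c n x" and y: "admissible c n y" and "c \<noteq> 0"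
    and agree: "\<And>j. a \<le> j \<Longrightarrow> j \<le> a + int n \<Longrightarrow> x j = y j"
  shows "x = y"
proof
  fix k
  define window where "window i \<longleftrightarrow> (\<forall>j. i \<le> j \<and> j \<le> i + int n \<longrightarrow> x j = y j)" for i
  have "window i" for i
  proof (induction i rule: int_induct[where k = a])
    case base
    then show ?case using agree unfolding window_def by blast
  next
    case (step1 i)
    have "x (i + int n + 1) = y (i + int n + 1)"
      by (rule admissible_eq_right_neighbour[OF x y \<open>c \<noteq> 0\<close>])
        (use step1(2) in \<open>auto simp: window_def\<close>)
    show ?case
      unfolding window_def
    proof (intro allI impI)
      fix j assume "i + 1 \<le> j \<and> j \<le> i + 1 + int n"
      then show "x j = y j"
        using step1(2) \<open>x (i + int n + 1) = y (i + int n + 1)\<close> unfolding window_def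
        by (cases "j = i + int n + 1") auto
    qed
  next
    case (step2 i)
    have "x (i - 1) = y (i - 1)"
      by (rule admissible_eq_left_neighbour[OF x y \<open>c \<noteq> 0\<close>])
        (use step2(2) in \<open>auto simp: window_def\<close>)
    show ?case
      unfolding window_def
    proof (intro allI impI)
      fix j assume "i - 1 \<le> j \<and> j \<le> i - 1 + int n"
      then show "x j = y j"
        using step2(2) \<open>x (i - 1) = y (i - 1)\<close> unfolding window_def
        by (cases "j = i - 1") auto
    qed
  qed
  from this[of k] show "x k = y k"
    unfolding window_def by simp
qed

theorem mainTheorem12:
  fixes c :: "'a::field" and n :: nat and f g :: "int \<times> int \<Rightarrow> 'a" and a :: int
  assumes "c \<noteq> 0" and "n \<ge> 1"
    and "is_frieze c n f" and "is_frieze c n g"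
    and "\<forall>m::nat. m \<le> n + 2 \<longrightarrow> f (a + int m, a + int m) = g (a + int m, a + int m)"
  shows "\<forall>p \<in> frieze_domain n. f p = g p"
proof -
  obtain x where x: "admissible c n x"
    and f: "\<forall>i j. (i, j) \<in> frieze_domain n \<longrightarrow> f (i, j) = contI c x i (j - i + 1)"
    using assms(3) unfolding is_frieze_def by blast
  obtain y where y: "admissible c n y"
    and g: "\<forall>i j. (i, j) \<in> frieze_domain n \<longrightarrow> g (i, j) = contI c y i (j - i + 1)"
    using assms(4) unfolding is_frieze_def by blast
  have "f (i, i) = x i" "g (i, i) = y i" for i
    using f g by (simp_all add: frieze_domain_def contI_def)
  \<comment> \<open>only n + 1 of the n + 3 given agreements are needed, and \<open>n \<ge> 1\<close> is not\<close>
  then have "x j = y j" if "a \<le> j" "j \<le> a + int n" for j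
    using that assms(5)[rule_format, of "nat (j - a)"] by simp
  then have "x = y"
    using admissible_eqI_window[OF x y \<open>c \<noteq> 0\<close>] by blast
  then show ?thesis
    using f g by auto
qed

end
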